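(* Let $N\ge 1$ and let $T:M(N)\to M(N)$ be a linear map. For unitaries $U_1,U_2,V_1,V_2\in M(N)$ define the linear map $T(U_1,U_2,V_1,V_2):\mathbb{C}^N\to\mathbb{C}^N$ by $\lambda\mapsto \operatorname{diag}\big(U_2\,T(U_1D_\lambda V_1)\,V_2\big)$, where $D_\lambda=\operatorname{diag}(\lambda)$ is the diagonal matrix with diagonal $\lambda$ and, for a matrix $B$, $\operatorname{diag}(B)\in\mathbb{C}^N$ is its diagonal vector. Then for every $1\le p\le\infty$, $$\|T\|_{p\to p}=\sup_{U_1,U_2,V_1,V_2}\|T(U_1,U_2,V_1,V_2)\|_{\ell_p\to\ell_p},$$ the supremum being over all unitaries $U_1,U_2,V_1,V_2\in M(N)$.
   Context: $M(N)$ is the space of $N\times N$ complex matrices. For $1\le p<\infty$, $\|A\|_p=(\sum_i\sigma_i(A)^p)^{1/p}$ is the Schatten-$p$ norm (with $\sigma_i(A)$ the singular values), and $\|A\|_\infty$ is the operator (spectral) norm. $\|T\|_{p\to p}=\sup_{X\ne 0}\|T(X)\|_p/\|X\|_p$. For a linear map $S$ on $\mathbb{C}^N$, $\|S\|_{\ell_p\to\ell_p}=\sup_{x\neq 0}\|Sx\|_{\ell_p}/\|x\|_{\ell_p}$. *)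

theory Defs
  imports "HOL-Analysis.Analysis" "HOL-Computational_Algebra.Polynomial"
begin

text \<open>N x N complex matrices are modelled as complex^'n^'n, with N = CARD('n) >= 1.\<close>

definition adjoint_mat :: "complex^'n^'m \<Rightarrow> complex^'m^'n" where
  "adjoint_mat A = (\<chi> i j. cnj (A $ j $ i))"

definition unitary_mat :: "complex^'n^'n \<Rightarrow> bool" where
  "unitary_mat U \<longleftrightarrow> adjoint_mat U ** U = mat 1 \<and> U ** adjoint_mat U = mat 1"

definition char_poly_mat :: "complex^'n^'n \<Rightarrow> complex poly" where
  "char_poly_mat A = det ((\<chi> i j. (if i = j then [:0, 1:] else 0) - [: A $ i $ j :]) :: complex poly^'n^'n)"

definition singular_values :: "complex^'n^'n \<Rightarrow> real multiset" where
  "singular_values A = image_mset (\<lambda>z. sqrt (Re z)) (proots (char_poly_mat (adjoint_mat A ** A)))"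

definition schatten_norm :: "ereal \<Rightarrow> complex^'n^'n \<Rightarrow> real" where
  "schatten_norm p A =
     (if p = \<infinity> then onorm (\<lambda>x. A *v x)
      else (\<Sum>s\<in>#singular_values A. s powr real_of_ereal p) powr (1 / real_of_ereal p))"

definition lp_norm :: "ereal \<Rightarrow> complex^'n \<Rightarrow> real" where
  "lp_norm p x =
     (if p = \<infinity> then Max (range (\<lambda>i. norm (x $ i)))
      else (\<Sum>i\<in>UNIV. norm (x $ i) powr real_of_ereal p) powr (1 / real_of_ereal p))"

definition schatten_opnorm :: "ereal \<Rightarrow> (complex^'n^'n \<Rightarrow> complex^'n^'n) \<Rightarrow> real" where
  "schatten_opnorm p T = (SUP X\<in>{X. X \<noteq> 0}. schatten_norm p (T X) / schatten_norm p X)"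

definition lp_opnorm :: "ereal \<Rightarrow> (complex^'n \<Rightarrow> complex^'n) \<Rightarrow> real" where
  "lp_opnorm p S = (SUP x\<in>{x. x \<noteq> 0}. lp_norm p (S x) / lp_norm p x)"

definition complex_linear_mat :: "(complex^'n^'n \<Rightarrow> complex^'n^'n) \<Rightarrow> bool" where
  "complex_linear_mat T \<longleftrightarrow>
     (\<forall>X Y. T (X + Y) = T X + T Y) \<and>
     (\<forall>c X. T (\<chi> i j. c * X $ i $ j) = (\<chi> i j. c * T X $ i $ j))"

definition diag_of_vec :: "complex^'n \<Rightarrow> complex^'n^'n" where
  "diag_of_vec l = (\<chi> i j. if i = j then l $ i else 0)"

definition diag_vec :: "complex^'n^'n \<Rightarrow> complex^'n" where
  "diag_vec B = (\<chi> i. B $ i $ i)"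

definition compressed_map ::
  "(complex^'n^'n \<Rightarrow> complex^'n^'n) \<Rightarrow> complex^'n^'n \<Rightarrow> complex^'n^'n \<Rightarrow>
   complex^'n^'n \<Rightarrow> complex^'n^'n \<Rightarrow> complex^'n \<Rightarrow> complex^'n" where
  "compressed_map T U1 U2 V1 V2 = (\<lambda>l. diag_vec (U2 ** T (U1 ** diag_of_vec l ** V1) ** V2))"

end

theory Submission
  imports Defs
begin

text \<open>Both sides are compared through singular value decompositions \<open>X = U\<^sub>1 D\<^sub>d V\<^sub>1\<close>, and
  the Schatten \<open>p\<close>-norm of \<open>U D\<^sub>d V\<close> is the \<open>l\<^sub>p\<close> norm of \<open>d\<close>. If also \<open>T X = W D\<^sub>e Z\<close>,
  the compression with \<open>U\<^sub>2 = W\<^sup>*\<close>, \<open>V\<^sub>2 = Z\<^sup>*\<close> maps \<open>d\<close> to \<open>e\<close>, so every ratio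
  \<open>\<parallel>T X\<parallel>\<^sub>p / \<parallel>X\<parallel>\<^sub>p\<close> is attained by a compression. Conversely, a compression maps \<open>\<lambda>\<close> to the
  diagonal of some \<open>U D\<^sub>e V\<close> with \<open>\<parallel>e\<parallel>\<^sub>p = \<parallel>T (U\<^sub>1 D\<^sub>\<lambda> V\<^sub>1)\<parallel>\<^sub>p\<close>; its entries
  \<open>\<Sum>\<^sub>k U\<^sub>i\<^sub>k e\<^sub>k V\<^sub>k\<^sub>i\<close> are averages of the \<open>e\<^sub>k\<close> with doubly substochastic weights, so by Jensen
  its \<open>l\<^sub>p\<close> norm is at most \<open>\<parallel>e\<parallel>\<^sub>p\<close> (pinching). The SVD itself comes from an orthonormal
  eigenbasis of \<open>X\<^sup>* X\<close>, obtained by maximising the quadratic form on the unit sphere of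
  invariant subspaces.\<close>

section \<open>Orthonormal bases and the singular value decomposition\<close>

definition cinner :: "complex^'n \<Rightarrow> complex^'n \<Rightarrow> complex" where
  "cinner x y = (\<Sum>i\<in>UNIV. x$i * cnj (y$i))"

definition orthonormal_on :: "'i set \<Rightarrow> ('i \<Rightarrow> complex^'n) \<Rightarrow> bool" where
  "orthonormal_on K g \<longleftrightarrow> (\<forall>j\<in>K. \<forall>k\<in>K. cinner (g j) (g k) = (if j = k then 1 else 0))"

lemma vec_scaleR_nth: "((c::real) *\<^sub>R (x::complex^'n)) $ i = of_real c * x $ i"
  by (subst vector_scaleR_component) (rule scaleR_conv_of_real)

lemma cinner_commute: "cinner y x = cnj (cinner x y)"
  by (simp add: cinner_def mult.commute)

lemma cinner_add_left: "cinner (x + y) z = cinner x z + cinner y z"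
  by (simp add: cinner_def algebra_simps sum.distrib)

lemma cinner_scaleR_left: "cinner (c *\<^sub>R x) y = of_real c * cinner x y"
  unfolding cinner_def vec_scaleR_nth by (simp add: sum_distrib_left algebra_simps)

lemma cinner_scaleR_right: "cinner x (c *\<^sub>R y) = of_real c * cinner x y"
  unfolding cinner_def vec_scaleR_nth by (simp add: sum_distrib_left algebra_simps)

lemma cinner_zero_left [simp]: "cinner 0 y = 0"
  by (simp add: cinner_def)

lemma inner_eq_Re_cinner: "inner x y = Re (cinner x y)"
  by (simp add: cinner_def inner_vec_def inner_complex_def)

lemma inner_mult_ii_eq_Im_cinner: "inner x (\<chi> t. \<i> * y$t) = Im (cinner x y)"
  by (simp add: cinner_def inner_vec_def inner_complex_def Im_sum)

lemma norm_vec_square: "(norm (x::'a::real_normed_vector^'n))\<^sup>2 = (\<Sum>i\<in>UNIV. (norm (x$i))\<^sup>2)"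
  by (simp add: norm_vec_def L2_set_def sum_nonneg)

lemma cinner_self: "cinner x x = of_real ((norm x)\<^sup>2)"
proof -
  have "cinner x x = (\<Sum>i\<in>UNIV. of_real ((norm (x$i))\<^sup>2))"
    unfolding cinner_def by (rule sum.cong[OF refl], rule complex_norm_square[symmetric])
  thus ?thesis by (simp add: norm_vec_square)
qed

lemma cinner_matrix_vector: "cinner (A *v x) y = cinner x (adjoint_mat A *v y)"
proof -
  have "cinner (A *v x) y = (\<Sum>i\<in>UNIV. \<Sum>j\<in>UNIV. A$i$j * x$j * cnj (y$i))"
    by (simp add: cinner_def matrix_vector_mult_def sum_distrib_right)
  also have "\<dots> = (\<Sum>j\<in>UNIV. \<Sum>i\<in>UNIV. A$i$j * x$j * cnj (y$i))" by (rule sum.swap)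
  also have "\<dots> = cinner x (adjoint_mat A *v y)"
    by (simp add: cinner_def matrix_vector_mult_def adjoint_mat_def sum_distrib_left algebra_simps)
  finally show ?thesis .
qed

text \<open>Complex orthogonality to \<open>y\<close> is real orthogonality to \<open>y\<close> and to \<open>\<i> y\<close>, so a
  dimension count in the real space \<open>\<real>\<^sup>2\<^sup>n\<close> applies.\<close>

lemma exists_nonzero_orthogonal_family:
  fixes K :: "'n::finite set" and g :: "'n \<Rightarrow> complex^'n"
  assumes "K \<noteq> UNIV"
  shows "\<exists>x. x \<noteq> 0 \<and> (\<forall>j\<in>K. cinner x (g j) = 0)"
proof -
  define ig where "ig j = (\<chi> t. \<i> * g j $ t)" for j
  define S where "S = g ` K \<union> ig ` K"
  have "card S \<le> card K + card K"
    unfolding S_def by (intro card_Un_le[THEN order_trans] add_mono card_image_le) auto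
  also have "card K < CARD('n)" using assms by (intro psubset_card_mono) auto
  hence "card K + card K < DIM(complex^'n)" by simp
  finally have "dim S < DIM(complex^'n)" using dim_le_card'[of S] by (simp add: S_def)
  then obtain x where x0: "x \<noteq> 0" and xo: "\<And>y. y \<in> span S \<Longrightarrow> orthogonal x y"
    using orthogonal_to_subspace_exists by blast
  have "cinner x (g j) = 0" if "j \<in> K" for j
  proof -
    have "g j \<in> span S" "ig j \<in> span S" using that unfolding S_def by (auto intro: span_base)
    hence "inner x (g j) = 0" "inner x (ig j) = 0" using xo unfolding orthogonal_def by auto
    hence "Re (cinner x (g j)) = 0" "Im (cinner x (g j)) = 0"
      unfolding ig_def inner_mult_ii_eq_Im_cinner by (simp_all add: inner_eq_Re_cinner)
    thus ?thesis by (simp add: complex_eq_iff)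
  qed
  thus ?thesis using x0 by blast
qed

lemma orthonormal_on_extend:
  fixes P :: "complex^'n \<Rightarrow> bool" and K :: "'n set" and g :: "'n \<Rightarrow> complex^'n"
  assumes step: "\<And>K (g :: 'n \<Rightarrow> complex^'n). K \<noteq> UNIV \<Longrightarrow> \<forall>j\<in>K. P (g j) \<Longrightarrow>
      \<exists>x. cinner x x = 1 \<and> P x \<and> (\<forall>j\<in>K. cinner x (g j) = 0)"
    and "orthonormal_on K g" and "\<forall>j\<in>K. P (g j)"
  shows "\<exists>h. orthonormal_on UNIV h \<and> (\<forall>j. P (h j)) \<and> (\<forall>j\<in>K. h j = g j)"
  using assms(2,3)
proof (induction "card (UNIV - K)" arbitrary: K g)
  case 0
  hence "K = UNIV" by auto
  thus ?case using 0 by auto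
next
  case (Suc m)
  have "UNIV - K \<noteq> {}" using Suc.hyps(2) by (metis card.empty nat.distinct(1))
  then obtain k where k: "k \<notin> K" by blast
  hence "K \<noteq> UNIV" by blast
  then obtain x where x1: "cinner x x = 1" and Px: "P x" and xo: "\<forall>j\<in>K. cinner x (g j) = 0"
    using step[OF _ Suc.prems(2)] by blast
  define g' where "g' = g(k := x)"
  have "UNIV - insert k K = (UNIV - K) - {k}" by auto
  hence m: "m = card (UNIV - insert k K)" using Suc.hyps(2) k by (simp add: card_Diff_singleton)
  have xo': "cinner (g j) x = 0" if "j \<in> K" for j
    using xo that cinner_commute[of "g j" x] by simp
  have on: "orthonormal_on (insert k K) g'"
    unfolding orthonormal_on_def
  proof (intro ballI)
    fix a b assume a: "a \<in> insert k K" and b: "b \<in> insert k K"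
    consider "a = k" "b = k" | "a = k" "b \<noteq> k" | "a \<noteq> k" "b = k" | "a \<noteq> k" "b \<noteq> k"
      by blast
    then show "cinner (g' a) (g' b) = (if a = b then 1 else 0)"
    proof cases
      case 1
      then show ?thesis using x1 by (simp add: g'_def)
    next
      case 2
      then show ?thesis using b xo by (simp add: g'_def)
    next
      case 3
      then show ?thesis using a xo' by (simp add: g'_def)
    next
      case 4
      then show ?thesis using a b Suc.prems(1) unfolding orthonormal_on_def by (simp add: g'_def)
    qed
  qed
  have P: "\<forall>j\<in>insert k K. P (g' j)" using Suc.prems(2) Px k unfolding g'_def by auto
  obtain h where h: "orthonormal_on UNIV h" "\<forall>j. P (h j)" "\<forall>j\<in>insert k K. h j = g' j"
    using Suc.hyps(1)[OF m on P] by (elim exE conjE)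
  have "\<forall>j\<in>K. h j = g j" using h(3) k by (simp add: g'_def)
  with h(1,2) show ?case by blast
qed

lemma orthonormal_on_extend_basis:
  fixes K :: "'n::finite set" and g :: "'n \<Rightarrow> complex^'n"
  assumes "orthonormal_on K g"
  shows "\<exists>h. orthonormal_on UNIV h \<and> (\<forall>j\<in>K. h j = g j)"
proof -
  have unit: "\<exists>x. cinner x x = 1 \<and> True \<and> (\<forall>j\<in>K'. cinner x (g' j) = 0)"
    if K': "K' \<noteq> UNIV" for K' and g' :: "'n \<Rightarrow> complex^'n"
  proof -
    obtain x where x: "x \<noteq> 0" "\<forall>j\<in>K'. cinner x (g' j) = 0"
      using exists_nonzero_orthogonal_family[OF K'] by blast
    define y where "y = (1 / norm x) *\<^sub>R x"
    have "cinner y y = 1"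
      using x by (simp add: y_def cinner_scaleR_left cinner_scaleR_right cinner_self power2_eq_square)
    moreover have "\<forall>j\<in>K'. cinner y (g' j) = 0" using x by (simp add: y_def cinner_scaleR_left)
    ultimately show ?thesis by blast
  qed
  obtain h where "orthonormal_on UNIV h" "\<forall>j\<in>K. h j = g j"
    using orthonormal_on_extend[where P = "\<lambda>_. True", OF unit assms] by auto
  thus ?thesis by blast
qed

lemma le_quadratic_imp_zero:
  fixes a b :: real
  assumes "\<And>t. 2 * t * a \<le> t\<^sup>2 * b"
  shows "a = 0"
proof (rule ccontr)
  assume "a \<noteq> 0"
  define c where "c = \<bar>b\<bar> + 1"
  have c: "c > 0" "b < c" by (auto simp: c_def)
  have "2 * (a / c) * a \<le> (a / c)\<^sup>2 * b" by (rule assms)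
  hence "2 * a\<^sup>2 * c \<le> a\<^sup>2 * b"
    using c by (simp add: power2_eq_square field_simps)
  moreover have "a\<^sup>2 > 0" using \<open>a \<noteq> 0\<close> by simp
  ultimately have "2 * c \<le> b"
    by (simp add: mult.assoc mult.left_commute[of 2])
  with c show False by simp
qed

text \<open>Perturbing \<open>x\<close> in a direction \<open>y \<bottom> x\<close> within \<open>W\<close> shows \<open>\<langle>f x, y\<rangle> = 0\<close>.\<close>

lemma selfadjoint_maximiser_is_eigenvector:
  fixes f :: "'a::euclidean_space \<Rightarrow> 'a"
  assumes lin: "linear f" and sa: "\<And>x y. inner (f x) y = inner x (f y)"
    and sub: "subspace W" and inv: "\<And>x. x \<in> W \<Longrightarrow> f x \<in> W"
    and xW: "x \<in> W" and nx: "norm x = 1"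
    and max: "\<And>z. z \<in> W \<Longrightarrow> norm z = 1 \<Longrightarrow> inner (f z) z \<le> inner (f x) x"
  shows "f x = inner (f x) x *\<^sub>R x"
proof -
  define q where "q z = inner (f z) z" for z
  define M where "M = q x"
  have qle: "q z \<le> M * (norm z)\<^sup>2" if "z \<in> W" for z
  proof (cases "z = 0")
    case True then show ?thesis unfolding q_def using lin by (simp add: linear_0)
  next
    case False
    have "q (z /\<^sub>R norm z) \<le> M"
      using max[of "z /\<^sub>R norm z"] that False sub by (simp add: q_def M_def subspace_scale)
    moreover have "q (z /\<^sub>R norm z) = q z / (norm z)\<^sup>2"
      unfolding q_def using lin by (simp add: linear_scale power2_eq_square divide_inverse)
    ultimately show ?thesis using False by (simp add: divide_le_eq mult.commute)
  qed
  have orth: "inner (f x) y = 0" if yW: "y \<in> W" and xy: "inner x y = 0" for y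
  proof (rule le_quadratic_imp_zero)
    fix t
    have "x + t *\<^sub>R y \<in> W" using xW yW sub by (simp add: subspace_add subspace_scale)
    hence "q (x + t *\<^sub>R y) \<le> M * (norm (x + t *\<^sub>R y))\<^sup>2" by (rule qle)
    moreover have "q (x + t *\<^sub>R y) = M + 2 * t * inner (f x) y + t\<^sup>2 * q y"
      unfolding q_def M_def using lin sa[of y x]
      by (simp add: linear_add linear_scale inner_add_left inner_add_right power2_eq_square
          inner_commute algebra_simps)
    moreover have "(norm (x + t *\<^sub>R y))\<^sup>2 = 1 + t\<^sup>2 * (norm y)\<^sup>2"
      using norm_add_Pythagorean[of x "t *\<^sub>R y"] nx xy
      by (simp add: orthogonal_def power_mult_distrib)
    ultimately show "2 * t * inner (f x) y \<le> t\<^sup>2 * (M * (norm y)\<^sup>2 - q y)"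
      by (simp add: algebra_simps)
  qed
  define r where "r = f x - M *\<^sub>R x"
  have rW: "r \<in> W" unfolding r_def using xW inv sub by (simp add: subspace_diff subspace_scale)
  have rx: "inner x r = 0"
    unfolding r_def M_def q_def using nx
    by (simp add: inner_diff_right inner_commute power2_norm_eq_inner[symmetric])
  have "inner r r = 0"
    using orth[OF rW rx] rx unfolding r_def
    by (simp add: inner_diff_left inner_diff_right right_diff_distrib)
  thus ?thesis by (simp add: r_def M_def q_def)
qed

lemma selfadjoint_eigenvector_in_invariant_subspace:
  fixes f :: "'a::euclidean_space \<Rightarrow> 'a"
  assumes lin: "linear f" and sa: "\<And>x y. inner (f x) y = inner x (f y)"
    and sub: "subspace W" and inv: "\<And>x. x \<in> W \<Longrightarrow> f x \<in> W"
    and z0: "z0 \<in> W" "z0 \<noteq> 0"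
  shows "\<exists>x\<in>W. norm x = 1 \<and> (\<exists>\<mu>. f x = \<mu> *\<^sub>R x)"
proof -
  define S where "S = sphere (0::'a) 1 \<inter> W"
  have "compact S" unfolding S_def
    by (simp add: closed_subspace compact_Int_closed sub)
  moreover have "z0 /\<^sub>R norm z0 \<in> S" using z0 sub unfolding S_def
    by (simp add: subspace_scale)
  moreover have "continuous_on S (\<lambda>z. inner (f z) z)"
    using lin linear_conv_bounded_linear by (intro continuous_intros linear_continuous_on) blast
  ultimately obtain x where "x \<in> S" and "\<And>z. z \<in> S \<Longrightarrow> inner (f z) z \<le> inner (f x) x"
    using continuous_attains_sup[of S "\<lambda>z. inner (f z) z"] by blast
  hence "x \<in> W" "norm x = 1" "f x = inner (f x) x *\<^sub>R x"
    using selfadjoint_maximiser_is_eigenvector[OF lin sa sub inv, of x] by (auto simp: S_def)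
  thus ?thesis by blast
qed

lemma adjoint_mat_adjoint_mat [simp]: "adjoint_mat (adjoint_mat A) = A"
  by (simp add: adjoint_mat_def vec_eq_iff)

lemma adjoint_mat_mult: "adjoint_mat (A ** B) = adjoint_mat B ** adjoint_mat A"
  by (simp add: adjoint_mat_def matrix_matrix_mult_def vec_eq_iff mult.commute)

lemma adjoint_mat_one [simp]: "adjoint_mat (mat 1 :: complex^'n^'n) = mat 1"
  by (simp add: adjoint_mat_def mat_def vec_eq_iff)

lemma unitary_mat_one: "unitary_mat (mat 1 :: complex^'n^'n)"
  by (simp add: unitary_mat_def)

lemma unitary_mat_adjoint: "unitary_mat U \<Longrightarrow> unitary_mat (adjoint_mat U)"
  by (simp add: unitary_mat_def)

lemma unitary_mat_mult:
  assumes "unitary_mat U" "unitary_mat V"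
  shows "unitary_mat (U ** V)"
proof -
  have "adjoint_mat (U ** V) ** (U ** V) = adjoint_mat V ** (adjoint_mat U ** U) ** V"
    "(U ** V) ** adjoint_mat (U ** V) = U ** (V ** adjoint_mat V) ** adjoint_mat U"
    by (simp_all add: adjoint_mat_mult matrix_mul_assoc)
  thus ?thesis using assms by (simp add: unitary_mat_def)
qed

lemma norm_unitary_mat_mult_vec:
  assumes "unitary_mat U"
  shows "norm (U *v x) = norm x"
proof -
  have "cinner (U *v x) (U *v x) = cinner x x"
    using assms by (simp add: cinner_matrix_vector matrix_vector_mul_assoc unitary_mat_def)
  hence "(norm (U *v x))\<^sup>2 = (norm x)\<^sup>2" by (simp only: cinner_self of_real_eq_iff)
  thus ?thesis by (simp add: power2_eq_iff_nonneg)
qed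

definition cols_mat :: "('n \<Rightarrow> complex^'m) \<Rightarrow> complex^'n^'m" where
  "cols_mat v = (\<chi> i k. v k $ i)"

lemma matrix_mult_cols_mat: "A ** cols_mat v = cols_mat (\<lambda>k. A *v v k)"
  by (simp add: cols_mat_def matrix_matrix_mult_def matrix_vector_mult_def)

lemma matrix_mult_diag_nth: "(A ** diag_of_vec d) $ i $ k = A $ i $ k * d $ k"
proof -
  have "(A ** diag_of_vec d) $ i $ k = (\<Sum>j\<in>UNIV. A $ i $ j * (if j = k then d $ j else 0))"
    unfolding diag_of_vec_def matrix_matrix_mult_def by simp
  also have "\<dots> = (\<Sum>j\<in>UNIV. if j = k then A $ i $ k * d $ k else 0)" by (rule sum.cong) auto
  finally show ?thesis by simp
qed

lemma unitary_cols_mat: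
  assumes "orthonormal_on UNIV v"
  shows "unitary_mat (cols_mat v)"
proof -
  have "adjoint_mat (cols_mat v) ** cols_mat v = mat 1"
    using assms unfolding orthonormal_on_def
    by (simp add: adjoint_mat_def cols_mat_def matrix_matrix_mult_def cinner_def mat_def
        vec_eq_iff mult.commute)
  moreover from this have "cols_mat v ** adjoint_mat (cols_mat v) = mat 1"
    using matrix_left_right_inverse by blast
  ultimately show ?thesis unfolding unitary_mat_def by blast
qed

lemma hermitian_orthonormal_eigenbasis:
  fixes H :: "complex^'n^'n"
  assumes herm: "adjoint_mat H = H"
  shows "\<exists>v :: 'n \<Rightarrow> complex^'n. orthonormal_on UNIV v \<and> (\<forall>k. \<exists>\<mu>::real. H *v v k = \<mu> *\<^sub>R v k)"
proof -
  let ?eigen = "\<lambda>x. \<exists>\<mu>::real. H *v x = \<mu> *\<^sub>R x"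
  have step: "\<exists>x. cinner x x = 1 \<and> ?eigen x \<and> (\<forall>j\<in>K. cinner x (g j) = 0)"
    if K: "K \<noteq> UNIV" and eigen: "\<forall>j\<in>K. ?eigen (g j)" for K and g :: "'n \<Rightarrow> complex^'n"
  proof -
    define W where "W = {x. \<forall>j\<in>K. cinner x (g j) = 0}"
    obtain z0 where "z0 \<in> W" "z0 \<noteq> 0"
      using exists_nonzero_orthogonal_family[OF K] unfolding W_def by blast
    moreover have "subspace W" unfolding subspace_def W_def
      by (simp add: cinner_add_left cinner_scaleR_left)
    moreover have "H *v x \<in> W" if "x \<in> W" for x
    proof -
      have "cinner (H *v x) (g j) = 0" if "j \<in> K" for j
      proof -
        obtain \<mu> where "H *v g j = \<mu> *\<^sub>R g j" using eigen \<open>j \<in> K\<close> by blast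
        thus ?thesis using \<open>x \<in> W\<close> that unfolding W_def
          by (simp add: cinner_matrix_vector herm cinner_scaleR_right)
      qed
      thus ?thesis unfolding W_def by simp
    qed
    moreover have "inner (H *v x) y = inner x (H *v y)" for x y
      by (simp add: inner_eq_Re_cinner cinner_matrix_vector herm)
    ultimately obtain x where "x \<in> W" "norm x = 1" "?eigen x"
      using selfadjoint_eigenvector_in_invariant_subspace[OF matrix_vector_mul_linear] by metis
    moreover have "cinner x x = 1" using \<open>norm x = 1\<close> by (simp add: cinner_self)
    ultimately show ?thesis unfolding W_def by blast
  qed
  have "\<exists>v :: 'n \<Rightarrow> complex^'n. orthonormal_on UNIV v \<and> (\<forall>j. ?eigen (v j)) \<and> (\<forall>j\<in>{}. v j = 0)"
    by (rule orthonormal_on_extend[OF step]) (simp_all add: orthonormal_on_def)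
  thus ?thesis by blast
qed

text \<open>Normalising the nonzero members of a pairwise orthogonal family and completing them to an
  orthonormal basis factors the family as an orthonormal basis times a diagonal matrix.\<close>

lemma cols_mat_orthogonal_factor:
  fixes w :: "'n \<Rightarrow> complex^'n"
  assumes orth: "\<And>j k. j \<noteq> k \<Longrightarrow> cinner (w j) (w k) = 0"
  shows "\<exists>u d. orthonormal_on UNIV u \<and> cols_mat w = cols_mat u ** diag_of_vec d"
proof -
  define K where "K = {k. w k \<noteq> 0}"
  define g where "g k = (1 / norm (w k)) *\<^sub>R w k" for k
  have "orthonormal_on K g"
    using orth unfolding orthonormal_on_def K_def g_def
    by (auto simp: cinner_scaleR_left cinner_scaleR_right cinner_self power2_eq_square)
  then obtain u where u: "orthonormal_on UNIV u" and ug: "\<forall>k\<in>K. u k = g k"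
    using orthonormal_on_extend_basis by blast
  define d where "d = (\<chi> k. complex_of_real (norm (w k)))"
  have "w k $ i = u k $ i * d $ k" for i k
  proof (cases "k \<in> K")
    case True
    hence "u k $ i = of_real (1 / norm (w k)) * w k $ i"
      using ug by (simp add: g_def vec_scaleR_nth del: vector_scaleR_component)
    thus ?thesis using True by (simp add: d_def K_def)
  next
    case False
    thus ?thesis by (simp add: K_def d_def)
  qed
  hence "cols_mat w = cols_mat u ** diag_of_vec d"
    by (simp add: vec_eq_iff matrix_mult_diag_nth) (simp add: cols_mat_def)
  thus ?thesis using u by blast
qed

lemma singular_value_decomposition:
  fixes A :: "complex^'n^'n"
  shows "\<exists>U V d. unitary_mat U \<and> unitary_mat V \<and> A = U ** diag_of_vec d ** V"
proof -
  define H where "H = adjoint_mat A ** A"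
  have "adjoint_mat H = H" unfolding H_def by (simp add: adjoint_mat_mult)
  then obtain v :: "'n \<Rightarrow> complex^'n" where v: "orthonormal_on UNIV v"
    and eigen: "\<forall>k. \<exists>\<mu>::real. H *v v k = \<mu> *\<^sub>R v k"
    using hermitian_orthonormal_eigenbasis by blast
  have "cinner (A *v v j) (A *v v k) = 0" if "j \<noteq> k" for j k
  proof -
    obtain \<mu> where "H *v v k = \<mu> *\<^sub>R v k" using eigen by blast
    hence "cinner (A *v v j) (A *v v k) = of_real \<mu> * cinner (v j) (v k)"
      by (simp add: cinner_matrix_vector H_def matrix_vector_mul_assoc cinner_scaleR_right)
    thus ?thesis using v that unfolding orthonormal_on_def by simp
  qed
  then obtain u d where u: "orthonormal_on UNIV u"
    and Av: "cols_mat (\<lambda>k. A *v v k) = cols_mat u ** diag_of_vec d"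
    using cols_mat_orthogonal_factor[of "\<lambda>k. A *v v k"] by blast
  have V: "unitary_mat (cols_mat v)" by (rule unitary_cols_mat[OF v])
  have "A = A ** (cols_mat v ** adjoint_mat (cols_mat v))"
    using V by (simp add: unitary_mat_def)
  also have "\<dots> = (A ** cols_mat v) ** adjoint_mat (cols_mat v)" by (simp add: matrix_mul_assoc)
  also have "\<dots> = cols_mat u ** diag_of_vec d ** adjoint_mat (cols_mat v)"
    by (simp add: matrix_mult_cols_mat Av)
  finally show ?thesis
    using unitary_cols_mat[OF u] unitary_mat_adjoint[OF V] by blast
qed

section \<open>Schatten norms of \<open>U D V\<close>\<close>

definition const_poly_mat :: "complex^'n^'m \<Rightarrow> complex poly^'n^'m" where
  "const_poly_mat M = (\<chi> i j. [:M$i$j:])"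

lemma const_poly_mat_mult: "const_poly_mat (A ** B) = const_poly_mat A ** const_poly_mat B"
  by (simp add: const_poly_mat_def matrix_matrix_mult_def vec_eq_iff sum_to_poly ac_simps)

lemma const_poly_mat_one: "const_poly_mat (mat 1 :: complex^'n^'n) = mat 1"
  by (simp add: const_poly_mat_def mat_def vec_eq_iff)

lemma const_poly_mat_commute_mat: "const_poly_mat P ** mat c = mat c ** const_poly_mat (P::complex^'n^'n)"
  by (simp add: const_poly_mat_def mat_def matrix_matrix_mult_def vec_eq_iff if_distrib if_distribR
      mult.commute cong: if_cong)

lemma matrix_mul_diff_ldistrib: "(A::'a::ring_1^'n^'m) ** (B - C) = A ** B - A ** C"
  by (simp add: matrix_matrix_mult_def vec_eq_iff sum_subtractf algebra_simps)

lemma matrix_mul_diff_rdistrib: "((A::'a::ring_1^'n^'m) - B) ** C = A ** C - B ** C"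
  by (simp add: matrix_matrix_mult_def vec_eq_iff sum_subtractf algebra_simps)

lemma char_poly_mat_eq_det: "char_poly_mat M = det (mat [:0, 1:] - const_poly_mat M)"
  unfolding char_poly_mat_def const_poly_mat_def mat_def
  by (rule arg_cong[where f = det]) (simp add: vec_eq_iff)

lemma char_poly_mat_similar:
  fixes P V M :: "complex^'n^'n"
  assumes PV: "P ** V = mat 1"
  shows "char_poly_mat (P ** M ** V) = char_poly_mat M"
proof -
  let ?X = "mat [:0, 1:] :: complex poly^'n^'n"
  have PV': "const_poly_mat P ** const_poly_mat V = mat 1"
    by (simp only: const_poly_mat_mult[symmetric] PV const_poly_mat_one)
  have "const_poly_mat P ** ?X ** const_poly_mat V = ?X ** (const_poly_mat P ** const_poly_mat V)"
    by (simp only: const_poly_mat_commute_mat[of P] matrix_mul_assoc)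
  hence "const_poly_mat P ** ?X ** const_poly_mat V = ?X"
    by (simp only: PV' matrix_mul_rid)
  hence "?X - const_poly_mat (P ** M ** V) = const_poly_mat P ** (?X - const_poly_mat M) ** const_poly_mat V"
    by (simp add: const_poly_mat_mult matrix_mul_diff_ldistrib matrix_mul_diff_rdistrib)
  hence "char_poly_mat (P ** M ** V)
      = det (const_poly_mat P ** (?X - const_poly_mat M) ** const_poly_mat V)"
    by (simp only: char_poly_mat_eq_det)
  also have "\<dots> = det (?X - const_poly_mat M) * det (const_poly_mat P ** const_poly_mat V)"
    by (simp only: det_mul mult_ac)
  also have "\<dots> = char_poly_mat M"
    by (simp only: PV' det_I char_poly_mat_eq_det mult_1_right)
  finally show ?thesis .
qed

lemma proots_char_poly_mat_diag:
  "proots (char_poly_mat (diag_of_vec e)) = image_mset (\<lambda>i. e$i) (mset_set UNIV)"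
proof -
  have "char_poly_mat (diag_of_vec e) = (\<Prod>i\<in>UNIV. [:- (e$i), 1:])"
    unfolding char_poly_mat_def by (subst det_diagonal) (auto simp: diag_of_vec_def)
  hence "proots (char_poly_mat (diag_of_vec e)) = (\<Sum>i\<in>UNIV. {# e$i #})"
    by (simp add: proots_prod)
  also have "\<dots> = image_mset (\<lambda>i. e$i) (mset_set UNIV)"
    by (simp only: sum_unfold_sum_mset sum_mset_singleton_mset)
  finally show ?thesis .
qed

lemma adjoint_diag_mult_diag:
  "adjoint_mat (diag_of_vec d) ** diag_of_vec d = diag_of_vec (\<chi> i. of_real ((norm (d$i))\<^sup>2))"
proof -
  have norm_sq: "cnj (d$i) * d$i = of_real ((norm (d$i))\<^sup>2)" for i
    by (simp only: complex_norm_square mult.commute)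
  have "(adjoint_mat (diag_of_vec d) ** diag_of_vec d) $ i $ j
      = diag_of_vec (\<chi> i. of_real ((norm (d$i))\<^sup>2)) $ i $ j" for i j
    unfolding matrix_mult_diag_nth
    by (simp add: adjoint_mat_def diag_of_vec_def norm_sq del: of_real_power)
  thus ?thesis by (simp add: vec_eq_iff)
qed

lemma singular_values_unitary_diag:
  assumes U: "unitary_mat U" and V: "unitary_mat V"
  shows "singular_values (U ** diag_of_vec d ** V) = image_mset (\<lambda>i. norm (d$i)) (mset_set UNIV)"
proof -
  let ?D = "diag_of_vec d"
  have "adjoint_mat (U ** ?D ** V) ** (U ** ?D ** V)
      = adjoint_mat V ** (adjoint_mat ?D ** (adjoint_mat U ** U) ** ?D) ** V"
    by (simp only: adjoint_mat_mult matrix_mul_assoc)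
  also have "\<dots> = adjoint_mat V ** diag_of_vec (\<chi> i. of_real ((norm (d$i))\<^sup>2)) ** V"
    using U by (simp add: unitary_mat_def adjoint_diag_mult_diag)
  finally have "singular_values (U ** ?D ** V)
      = image_mset (\<lambda>z. sqrt (Re z)) (proots (char_poly_mat (diag_of_vec (\<chi> i. of_real ((norm (d$i))\<^sup>2)))))"
    using V unfolding singular_values_def unitary_mat_def by (simp only: char_poly_mat_similar)
  thus ?thesis by (simp add: proots_char_poly_mat_diag multiset.map_comp o_def)
qed

lemma one_le_real_of_ereal: "1 \<le> p \<Longrightarrow> p \<noteq> \<infinity> \<Longrightarrow> 1 \<le> real_of_ereal p"
  by (cases p) auto

lemma norm_nth_le_lp_norm_infinity: "norm (x$i) \<le> lp_norm \<infinity> x"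
  unfolding lp_norm_def by (simp add: Max_ge)

lemma lp_norm_nonneg: "0 \<le> lp_norm p x"
proof (cases "p = \<infinity>")
  case True
  show ?thesis unfolding True using norm_ge_zero norm_nth_le_lp_norm_infinity by (rule order_trans)
qed (simp add: lp_norm_def)

lemma lp_norm_infinity_attained: "\<exists>k. lp_norm \<infinity> x = norm (x$k)"
proof -
  have "lp_norm \<infinity> x \<in> range (\<lambda>i. norm (x$i))" unfolding lp_norm_def by (simp add: Max_in)
  thus ?thesis by auto
qed

lemma lp_norm_infinity_le:
  assumes p: "1 \<le> p"
  shows "lp_norm \<infinity> x \<le> lp_norm p x"
proof (cases "p = \<infinity>")
  case False
  define r where "r = real_of_ereal p"
  have r: "1 \<le> r" unfolding r_def using one_le_real_of_ereal[OF p False] .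
  obtain k where k: "lp_norm \<infinity> x = norm (x$k)" using lp_norm_infinity_attained by blast
  have "norm (x$k) powr r \<le> (\<Sum>i\<in>UNIV. norm (x$i) powr r)"
    by (rule member_le_sum) auto
  hence "(norm (x$k) powr r) powr (1/r) \<le> (\<Sum>i\<in>UNIV. norm (x$i) powr r) powr (1/r)"
    by (rule powr_mono2[rotated 2]) (use r in auto)
  thus ?thesis using False k r unfolding lp_norm_def r_def by (simp add: powr_powr)
qed simp

lemma lp_norm_le_card_lp_norm_infinity:
  assumes p: "1 \<le> p"
  shows "lp_norm p (x::complex^'n) \<le> real CARD('n) * lp_norm \<infinity> x"
proof (cases "p = \<infinity>")
  case True
  thus ?thesis using lp_norm_nonneg[of \<infinity> x] by (simp add: mult_le_cancel_right1)
next
  case False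
  define r where "r = real_of_ereal p"
  define N where "N = real CARD('n)"
  define m where "m = lp_norm \<infinity> x"
  have r: "1 \<le> r" unfolding r_def using one_le_real_of_ereal[OF p False] .
  have N: "1 \<le> N" unfolding N_def by simp
  have m: "0 \<le> m" unfolding m_def by (rule lp_norm_nonneg)
  have "(\<Sum>i\<in>UNIV. norm (x$i) powr r) \<le> (\<Sum>i\<in>(UNIV::'n set). m powr r)"
    by (intro sum_mono powr_mono2) (use r norm_nth_le_lp_norm_infinity in \<open>auto simp: m_def\<close>)
  also have "\<dots> = N * m powr r" by (simp add: N_def)
  also have "\<dots> \<le> N powr r * m powr r"
    using powr_mono[of 1 r N] r N by (intro mult_right_mono) auto
  also have "\<dots> = (N * m) powr r" using N m by (simp add: powr_mult)
  finally have "(\<Sum>i\<in>UNIV. norm (x$i) powr r) powr (1/r) \<le> ((N * m) powr r) powr (1/r)"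
    using r by (intro powr_mono2) (auto intro: sum_nonneg)
  also have "\<dots> = N * m" using r N m by (simp add: powr_powr)
  finally show ?thesis using False unfolding lp_norm_def r_def N_def m_def by simp
qed

lemma norm_le_card_lp_norm:
  assumes "1 \<le> p"
  shows "norm (x::complex^'n) \<le> real CARD('n) * lp_norm p x"
proof -
  have "norm x \<le> (\<Sum>i\<in>UNIV. norm (x$i))"
    unfolding norm_vec_def using L2_set_le_sum_abs[of "\<lambda>i. norm (x$i)"] by simp
  also have "\<dots> \<le> (\<Sum>i\<in>(UNIV::'n set). lp_norm \<infinity> x)"
    by (intro sum_mono norm_nth_le_lp_norm_infinity)
  also have "\<dots> \<le> real CARD('n) * lp_norm p x"
    using lp_norm_infinity_le[OF assms, of x] by simp
  finally show ?thesis .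
qed

lemma lp_norm_le_card_norm:
  assumes "1 \<le> p"
  shows "lp_norm p (x::complex^'n) \<le> real CARD('n) * norm x"
proof -
  obtain k where "lp_norm \<infinity> x = norm (x$k)" using lp_norm_infinity_attained by blast
  hence "lp_norm \<infinity> x \<le> norm x" using Finite_Cartesian_Product.norm_nth_le[of x k] by simp
  thus ?thesis using lp_norm_le_card_lp_norm_infinity[OF assms, of x] by (simp add: order_trans)
qed

lemma lp_norm_pos:
  assumes "1 \<le> p" "x \<noteq> 0"
  shows "0 < lp_norm p (x::complex^'n)"
proof -
  have "0 < norm x" using assms(2) by simp
  also have "\<dots> \<le> real CARD('n) * lp_norm p x" by (rule norm_le_card_lp_norm[OF assms(1)])
  finally show ?thesis by (simp add: zero_less_mult_iff)
qed

lemma diag_of_vec_mult_vec_nth: "(diag_of_vec d *v y) $ i = d$i * y$i"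
proof -
  have "(diag_of_vec d *v y) $ i = (\<Sum>j\<in>UNIV. (if i = j then d$i else 0) * y$j)"
    unfolding diag_of_vec_def matrix_vector_mult_def by simp
  also have "\<dots> = (\<Sum>j\<in>UNIV. if j = i then d$i * y$i else 0)" by (rule sum.cong) auto
  finally show ?thesis by simp
qed

lemma norm_diag_of_vec_mult_vec_le: "norm (diag_of_vec d *v y) \<le> lp_norm \<infinity> d * norm y"
proof -
  have "(norm (diag_of_vec d *v y))\<^sup>2 = (\<Sum>i\<in>UNIV. (norm (d$i))\<^sup>2 * (norm (y$i))\<^sup>2)"
    by (simp add: norm_vec_square diag_of_vec_mult_vec_nth norm_mult power_mult_distrib)
  also have "\<dots> \<le> (\<Sum>i\<in>UNIV. (lp_norm \<infinity> d)\<^sup>2 * (norm (y$i))\<^sup>2)"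
    by (intro sum_mono mult_right_mono power_mono norm_nth_le_lp_norm_infinity) auto
  also have "\<dots> = (lp_norm \<infinity> d * norm y)\<^sup>2"
    by (simp add: norm_vec_square power_mult_distrib sum_distrib_left)
  finally show ?thesis by (rule power2_le_imp_le) (simp add: lp_norm_nonneg)
qed

lemma norm_axis_complex: "norm (axis k (c::complex) :: complex^'n) = norm c"
proof -
  have "(norm (axis k c :: complex^'n))\<^sup>2 = (\<Sum>i\<in>UNIV. if i = k then (norm c)\<^sup>2 else 0)"
    unfolding norm_vec_square by (intro sum.cong) (auto simp: axis_def)
  thus ?thesis by (simp add: power2_eq_iff_nonneg)
qed

lemma onorm_unitary_diag:
  assumes U: "unitary_mat U" and V: "unitary_mat V"
  shows "onorm (\<lambda>x. (U ** diag_of_vec d ** V) *v x) = lp_norm \<infinity> d"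
proof (rule antisym)
  have factor: "(U ** diag_of_vec d ** V) *v x = U *v (diag_of_vec d *v (V *v x))" for x
    by (simp add: matrix_vector_mul_assoc matrix_mul_assoc)
  show "onorm (\<lambda>x. (U ** diag_of_vec d ** V) *v x) \<le> lp_norm \<infinity> d"
  proof (rule onorm_bound)
    show "0 \<le> lp_norm \<infinity> d" by (rule lp_norm_nonneg)
    fix x
    show "norm ((U ** diag_of_vec d ** V) *v x) \<le> lp_norm \<infinity> d * norm x"
      using norm_diag_of_vec_mult_vec_le[of d "V *v x"]
      by (simp add: factor norm_unitary_mat_mult_vec[OF U] norm_unitary_mat_mult_vec[OF V])
  qed
  obtain k where k: "lp_norm \<infinity> d = norm (d$k)" using lp_norm_infinity_attained by blast
  define x where "x = adjoint_mat V *v axis k 1"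
  have "V *v x = axis k 1" using V by (simp add: x_def matrix_vector_mul_assoc unitary_mat_def)
  moreover have "diag_of_vec d *v axis k 1 = axis k (d$k)"
    by (simp add: vec_eq_iff diag_of_vec_mult_vec_nth axis_def)
  ultimately have "norm ((U ** diag_of_vec d ** V) *v x) = lp_norm \<infinity> d"
    by (simp add: factor norm_unitary_mat_mult_vec[OF U] norm_axis_complex k)
  moreover have "norm x = 1"
    using norm_unitary_mat_mult_vec[OF unitary_mat_adjoint[OF V]] by (simp add: x_def norm_axis_complex)
  ultimately show "lp_norm \<infinity> d \<le> onorm (\<lambda>x. (U ** diag_of_vec d ** V) *v x)"
    using onorm[OF matrix_vector_mul_bounded_linear, of "U ** diag_of_vec d ** V" x] by simp
qed

lemma schatten_norm_unitary_diag:
  assumes U: "unitary_mat U" and V: "unitary_mat V"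
  shows "schatten_norm p (U ** diag_of_vec d ** V) = lp_norm p d"
proof (cases "p = \<infinity>")
  case True
  thus ?thesis using onorm_unitary_diag[OF U V] by (simp add: schatten_norm_def)
next
  case False
  thus ?thesis unfolding schatten_norm_def lp_norm_def singular_values_unitary_diag[OF U V]
    by (simp add: multiset.map_comp o_def sum_unfold_sum_mset)
qed

lemma diag_vec_diag_of_vec [simp]: "diag_vec (diag_of_vec d) = d"
  by (simp add: diag_vec_def diag_of_vec_def vec_eq_iff)

lemma unitary_diag_eq_0_iff:
  assumes U: "unitary_mat U" and V: "unitary_mat V"
  shows "U ** diag_of_vec d ** V = 0 \<longleftrightarrow> d = 0"
proof
  assume UDV: "U ** diag_of_vec d ** V = 0"
  have "(adjoint_mat U ** U) ** diag_of_vec d ** (V ** adjoint_mat V)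
      = adjoint_mat U ** (U ** diag_of_vec d ** V) ** adjoint_mat V"
    by (simp only: matrix_mul_assoc)
  also have "\<dots> = 0" unfolding UDV by (simp add: matrix_matrix_mult_def vec_eq_iff)
  finally have "(adjoint_mat U ** U) ** diag_of_vec d ** (V ** adjoint_mat V) = 0" .
  hence "diag_of_vec d = 0" using U V by (simp add: unitary_mat_def)
  moreover have "d $ i = diag_of_vec d $ i $ i" for i by (simp add: diag_of_vec_def)
  ultimately show "d = 0" by (simp add: vec_eq_iff)
next
  assume "d = 0"
  hence "diag_of_vec d = 0" by (simp add: diag_of_vec_def vec_eq_iff)
  thus "U ** diag_of_vec d ** V = 0" by (simp add: matrix_matrix_mult_def vec_eq_iff)
qed

section \<open>Pinching\<close>

lemma convex_on_powr_nonneg: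
  fixes p :: real
  assumes p: "p \<ge> 1"
  shows "convex_on {0..} (\<lambda>x. x powr p)"
proof (rule convex_onI)
  fix t x y :: real
  assume t: "0 < t" "t < 1" and x: "x \<in> {0..}" and y: "y \<in> {0..}"
  have shrink: "(c * z) powr p \<le> c * z powr p" if "0 \<le> c" "c \<le> 1" "0 \<le> z" for c z :: real
  proof -
    have "c powr p \<le> c"
      using powr_mono'[of 1 p c] that p by (cases "c = 0") auto
    thus ?thesis using that by (simp add: powr_mult mult_right_mono)
  qed
  show "((1 - t) *\<^sub>R x + t *\<^sub>R y) powr p \<le> (1 - t) * x powr p + t * y powr p"
  proof (cases "x = 0 \<or> y = 0")
    case False
    hence "x \<in> {0<..}" "y \<in> {0<..}" using x y by auto
    thus ?thesis using convex_onD[OF powr_convex[OF p], of t x y] t by auto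
  next
    case True
    thus ?thesis using shrink[of t y] shrink[of "1 - t" x] t x y p by auto
  qed
qed (simp add: convex_real_interval)

lemma powr_sum_substochastic_le:
  fixes a s :: "'i \<Rightarrow> real" and p :: real
  assumes fin: "finite I" and p: "p \<ge> 1" and a: "\<And>j. j \<in> I \<Longrightarrow> a j \<ge> 0"
    and s: "\<And>j. j \<in> I \<Longrightarrow> s j \<ge> 0" and mass: "sum a I \<le> 1"
  shows "(\<Sum>j\<in>I. a j * s j) powr p \<le> (\<Sum>j\<in>I. a j * s j powr p)"
proof (cases "sum a I = 0")
  case True
  hence "\<forall>j\<in>I. a j = 0" using sum_nonneg_eq_0_iff[OF fin] a by blast
  thus ?thesis using p by simp
next
  case False
  define A where "A = sum a I"
  have A0: "A > 0" using False a sum_nonneg[of I a] unfolding A_def by fastforce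
  have "(\<Sum>j\<in>I. (a j / A) *\<^sub>R s j) powr p \<le> (\<Sum>j\<in>I. (a j / A) * s j powr p)"
    using a s A0 False
    by (intro convex_on_sum[OF fin _ convex_on_powr_nonneg[OF p]])
       (auto simp: A_def sum_divide_distrib[symmetric])
  hence "(\<Sum>j\<in>I. a j * s j) powr p / A powr p \<le> (\<Sum>j\<in>I. a j * s j powr p) / A"
    using A0 by (simp add: sum_divide_distrib[symmetric] powr_divide sum_nonneg a s)
  hence "(\<Sum>j\<in>I. a j * s j) powr p \<le> (\<Sum>j\<in>I. a j * s j powr p) * (A powr p / A)"
    using A0 by (simp add: field_simps)
  moreover have "A powr p \<le> A"
    using powr_mono'[of 1 p A] A0 p mass by (simp add: A_def)
  hence "A powr p / A \<le> 1" using A0 by simp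
  moreover have "(\<Sum>j\<in>I. a j * s j powr p) \<ge> 0" using a s by (simp add: sum_nonneg)
  ultimately show ?thesis
    using mult_left_le[of "A powr p / A" "\<Sum>j\<in>I. a j * s j powr p"] by linarith
qed

lemma lp_norm_le_doubly_substochastic:
  fixes y d :: "complex^'n" and a :: "'n \<Rightarrow> 'n \<Rightarrow> real"
  assumes p: "1 \<le> p" and a0: "\<And>i k. 0 \<le> a i k"
    and row: "\<And>i. (\<Sum>k\<in>UNIV. a i k) \<le> 1" and col: "\<And>k. (\<Sum>i\<in>UNIV. a i k) \<le> 1"
    and y: "\<And>i. norm (y$i) \<le> (\<Sum>k\<in>UNIV. a i k * norm (d$k))"
  shows "lp_norm p y \<le> lp_norm p d"
proof (cases "p = \<infinity>")
  case True
  obtain i where i: "lp_norm \<infinity> y = norm (y$i)" using lp_norm_infinity_attained by blast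
  have "(\<Sum>k\<in>UNIV. a i k * norm (d$k)) \<le> (\<Sum>k\<in>UNIV. a i k * lp_norm \<infinity> d)"
    by (intro sum_mono mult_left_mono a0 norm_nth_le_lp_norm_infinity)
  also have "\<dots> \<le> lp_norm \<infinity> d"
    using mult_right_mono[OF row lp_norm_nonneg, of i \<infinity> d] by (simp add: sum_distrib_right)
  finally show ?thesis using True i y[of i] by simp
next
  case False
  define r where "r = real_of_ereal p"
  have r: "1 \<le> r" unfolding r_def using one_le_real_of_ereal[OF p False] .
  have "(\<Sum>i\<in>UNIV. norm (y$i) powr r) \<le> (\<Sum>i\<in>UNIV. (\<Sum>k\<in>UNIV. a i k * norm (d$k)) powr r)"
    using r y by (intro sum_mono powr_mono2) auto
  also have "\<dots> \<le> (\<Sum>i\<in>UNIV. \<Sum>k\<in>UNIV. a i k * norm (d$k) powr r)"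
    using r a0 row by (intro sum_mono powr_sum_substochastic_le) auto
  also have "\<dots> = (\<Sum>k\<in>UNIV. (\<Sum>i\<in>UNIV. a i k) * norm (d$k) powr r)"
    by (subst sum.swap) (simp add: sum_distrib_right)
  also have "\<dots> \<le> (\<Sum>k\<in>UNIV. norm (d$k) powr r)"
    using col by (intro sum_mono mult_left_le_one_le) (auto intro: sum_nonneg a0)
  finally have "(\<Sum>i\<in>UNIV. norm (y$i) powr r) powr (1/r) \<le> (\<Sum>k\<in>UNIV. norm (d$k) powr r) powr (1/r)"
    using r by (intro powr_mono2) (auto intro: sum_nonneg)
  thus ?thesis using False unfolding lp_norm_def r_def by simp
qed

lemma unitary_mat_row_norm_square_sum:
  assumes "unitary_mat U"
  shows "(\<Sum>j\<in>UNIV. (norm (U$i$j))\<^sup>2) = 1"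
proof -
  have "(U ** adjoint_mat U) $ i $ i = 1" using assms by (simp add: unitary_mat_def mat_def)
  hence "(\<Sum>j\<in>UNIV. U$i$j * cnj (U$i$j)) = 1" by (simp add: matrix_matrix_mult_def adjoint_mat_def)
  hence "(\<Sum>j\<in>UNIV. complex_of_real ((norm (U$i$j))\<^sup>2)) = 1" by (simp only: complex_norm_square)
  thus ?thesis by (simp only: of_real_sum[symmetric] of_real_eq_1_iff)
qed

lemma unitary_mat_col_norm_square_sum:
  assumes "unitary_mat U"
  shows "(\<Sum>i\<in>UNIV. (norm (U$i$j))\<^sup>2) = 1"
proof -
  have "(adjoint_mat U ** U) $ j $ j = 1" using assms by (simp add: unitary_mat_def mat_def)
  hence "(\<Sum>i\<in>UNIV. U$i$j * cnj (U$i$j)) = 1"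
    by (simp add: matrix_matrix_mult_def adjoint_mat_def mult.commute)
  hence "(\<Sum>i\<in>UNIV. complex_of_real ((norm (U$i$j))\<^sup>2)) = 1" by (simp only: complex_norm_square)
  thus ?thesis by (simp only: of_real_sum[symmetric] of_real_eq_1_iff)
qed

lemma unitary_mat_entry_product_sums_le:
  assumes U: "unitary_mat U" and V: "unitary_mat V"
  shows "(\<Sum>k\<in>UNIV. norm (U$i$k) * norm (V$k$i)) \<le> 1"
    and "(\<Sum>i\<in>UNIV. norm (U$i$k) * norm (V$k$i)) \<le> 1"
proof -
  have amgm: "norm (U$i$k) * norm (V$k$i) \<le> ((norm (U$i$k))\<^sup>2 + (norm (V$k$i))\<^sup>2) / 2" for i k
    using sum_squares_bound[of "norm (U$i$k)" "norm (V$k$i)"] by simp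
  have "(\<Sum>k\<in>UNIV. norm (U$i$k) * norm (V$k$i))
      \<le> (\<Sum>k\<in>UNIV. ((norm (U$i$k))\<^sup>2 + (norm (V$k$i))\<^sup>2) / 2)"
    by (intro sum_mono amgm)
  also have "\<dots> = ((\<Sum>k\<in>UNIV. (norm (U$i$k))\<^sup>2) + (\<Sum>k\<in>UNIV. (norm (V$k$i))\<^sup>2)) / 2"
    by (metis (no_types) sum.distrib sum_divide_distrib)
  finally show "(\<Sum>k\<in>UNIV. norm (U$i$k) * norm (V$k$i)) \<le> 1"
    using unitary_mat_row_norm_square_sum[OF U] unitary_mat_col_norm_square_sum[OF V] by simp
  have "(\<Sum>i\<in>UNIV. norm (U$i$k) * norm (V$k$i))
      \<le> (\<Sum>i\<in>UNIV. ((norm (U$i$k))\<^sup>2 + (norm (V$k$i))\<^sup>2) / 2)"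
    by (intro sum_mono amgm)
  also have "\<dots> = ((\<Sum>i\<in>UNIV. (norm (U$i$k))\<^sup>2) + (\<Sum>i\<in>UNIV. (norm (V$k$i))\<^sup>2)) / 2"
    by (metis (no_types) sum.distrib sum_divide_distrib)
  finally show "(\<Sum>i\<in>UNIV. norm (U$i$k) * norm (V$k$i)) \<le> 1"
    using unitary_mat_col_norm_square_sum[OF U] unitary_mat_row_norm_square_sum[OF V] by simp
qed

text \<open>The diagonal of \<open>U D V\<close> is \<open>\<Sum>\<^sub>k U\<^sub>i\<^sub>k d\<^sub>k V\<^sub>k\<^sub>i\<close>; the weights \<open>|U\<^sub>i\<^sub>k| |V\<^sub>k\<^sub>i|\<close> are doubly
  substochastic by AM-GM and unitarity.\<close>

lemma lp_norm_diag_vec_unitary_diag_le: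
  assumes U: "unitary_mat U" and V: "unitary_mat V" and p: "1 \<le> p"
  shows "lp_norm p (diag_vec (U ** diag_of_vec d ** V)) \<le> lp_norm p d"
proof (rule lp_norm_le_doubly_substochastic[OF p])
  fix i
  have "diag_vec (U ** diag_of_vec d ** V) $ i = (\<Sum>k\<in>UNIV. U$i$k * d$k * V$k$i)"
    by (simp add: diag_vec_def matrix_matrix_mult_def[of "U ** diag_of_vec d" V] matrix_mult_diag_nth)
  also have "norm \<dots> \<le> (\<Sum>k\<in>UNIV. norm (U$i$k) * norm (V$k$i) * norm (d$k))"
    using norm_sum[of "\<lambda>k. U$i$k * d$k * V$k$i" UNIV] by (simp add: norm_mult mult_ac)
  finally show "norm (diag_vec (U ** diag_of_vec d ** V) $ i)
      \<le> (\<Sum>k\<in>UNIV. norm (U$i$k) * norm (V$k$i) * norm (d$k))" .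
qed (use unitary_mat_entry_product_sums_le[OF U V] in auto)

section \<open>Finiteness of the Schatten operator norm\<close>

lemma norm_transpose_complex: "norm (transpose (A::complex^'n^'m)) = norm A"
proof -
  have "(norm (transpose A))\<^sup>2 = (norm A)\<^sup>2"
    by (simp add: norm_vec_square transpose_def) (rule sum.swap)
  thus ?thesis by (simp add: power2_eq_iff_nonneg)
qed

lemma unitary_mat_transpose:
  assumes "unitary_mat U"
  shows "unitary_mat (transpose U)"
proof -
  have adj: "adjoint_mat (transpose U) = transpose (adjoint_mat U)"
    by (simp add: adjoint_mat_def transpose_def)
  show ?thesis using assms
    unfolding unitary_mat_def adj matrix_transpose_mul[symmetric] by (simp add: transpose_mat)
qed

lemma norm_matrix_mult_unitary_right:
  assumes "unitary_mat V"
  shows "norm (A ** V) = norm (A::complex^'n^'m)"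
proof -
  have rows: "(A ** V) $ i = transpose V *v A $ i" for i
    by (simp add: vec_eq_iff matrix_matrix_mult_def matrix_vector_mult_def transpose_def mult.commute)
  have "(norm (A ** V))\<^sup>2 = (\<Sum>i\<in>UNIV. (norm (transpose V *v A $ i))\<^sup>2)"
    by (simp only: norm_vec_square[of "A ** V"] rows)
  also have "\<dots> = (norm A)\<^sup>2"
    by (simp only: norm_unitary_mat_mult_vec[OF unitary_mat_transpose[OF assms]] norm_vec_square[of A])
  finally have "(norm (A ** V))\<^sup>2 = (norm A)\<^sup>2" .
  thus ?thesis by (simp add: power2_eq_iff_nonneg)
qed

lemma norm_matrix_mult_unitary_left:
  assumes "unitary_mat U"
  shows "norm (U ** A) = norm (A::complex^'n^'m)"
proof -
  have "norm (U ** A) = norm (transpose A ** transpose U)"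
    by (metis matrix_transpose_mul norm_transpose_complex)
  also have "\<dots> = norm A"
    by (simp add: norm_matrix_mult_unitary_right[OF unitary_mat_transpose[OF assms]]
        norm_transpose_complex)
  finally show ?thesis .
qed

lemma norm_diag_of_vec: "norm (diag_of_vec d) = norm d"
proof -
  have "diag_of_vec d $ i = axis i (d$i)" for i
    by (auto simp: diag_of_vec_def axis_def vec_eq_iff)
  hence "norm (diag_of_vec d $ i) = norm (d$i)" for i by (simp add: norm_axis_complex)
  thus ?thesis by (simp add: norm_vec_def)
qed

lemma norm_unitary_diag:
  assumes "unitary_mat U" "unitary_mat V"
  shows "norm (U ** diag_of_vec d ** V) = norm d"
  using assms by (simp add: norm_matrix_mult_unitary_left norm_matrix_mult_unitary_right
      norm_diag_of_vec matrix_mul_assoc[symmetric])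

lemma norm_le_card_schatten_norm:
  assumes "1 \<le> p"
  shows "norm (X::complex^'n^'n) \<le> real CARD('n) * schatten_norm p X"
proof -
  obtain U V d where "unitary_mat U" "unitary_mat V" and X: "X = U ** diag_of_vec d ** V"
    using singular_value_decomposition by blast
  thus ?thesis using norm_le_card_lp_norm[OF assms, of d]
    by (simp add: norm_unitary_diag schatten_norm_unitary_diag)
qed

lemma schatten_norm_le_card_norm:
  assumes "1 \<le> p"
  shows "schatten_norm p (X::complex^'n^'n) \<le> real CARD('n) * norm X"
proof -
  obtain U V d where "unitary_mat U" "unitary_mat V" and X: "X = U ** diag_of_vec d ** V"
    using singular_value_decomposition by blast
  thus ?thesis using lp_norm_le_card_norm[OF assms, of d]
    by (simp add: norm_unitary_diag schatten_norm_unitary_diag)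
qed

lemma schatten_norm_pos:
  assumes "1 \<le> p" "X \<noteq> 0"
  shows "0 < schatten_norm p (X::complex^'n^'n)"
proof -
  have "0 < norm X" using assms(2) by simp
  also have "\<dots> \<le> real CARD('n) * schatten_norm p X" by (rule norm_le_card_schatten_norm[OF assms(1)])
  finally show ?thesis by (simp add: zero_less_mult_iff)
qed

lemma complex_linear_mat_imp_linear:
  fixes T :: "complex^'n^'n \<Rightarrow> complex^'n^'n"
  assumes "complex_linear_mat T"
  shows "linear T"
proof
  show "T (X + Y) = T X + T Y" for X Y using assms by (simp add: complex_linear_mat_def)
  have scale: "c *\<^sub>R X = (\<chi> i j. of_real c * X $ i $ j)" for c and X :: "complex^'n^'n"
    by (simp add: vec_eq_iff) (simp add: scaleR_conv_of_real)
  show "T (c *\<^sub>R X) = c *\<^sub>R T X" for c X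
    unfolding scale using assms by (simp add: complex_linear_mat_def)
qed

text \<open>The supremum in \<open>schatten_opnorm\<close> is taken in the reals, so finiteness has to be shown
  separately; it follows from boundedness of \<open>T\<close> in the Frobenius norm.\<close>

lemma bdd_above_schatten_ratio:
  fixes T :: "complex^'n^'n \<Rightarrow> complex^'n^'n"
  assumes lin: "complex_linear_mat T" and p: "1 \<le> p"
  shows "bdd_above ((\<lambda>X. schatten_norm p (T X) / schatten_norm p X) ` {X. X \<noteq> 0})"
proof -
  define N where "N = real CARD('n)"
  have "bounded_linear T"
    using complex_linear_mat_imp_linear[OF lin] linear_conv_bounded_linear by blast
  then obtain B where B: "\<And>X. norm (T X) \<le> norm X * B" and "B > 0"
    using bounded_linear.pos_bounded by blast
  have "schatten_norm p (T X) / schatten_norm p X \<le> N * N * B" if "X \<noteq> 0" for X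
  proof -
    have "schatten_norm p (T X) \<le> N * norm (T X)"
      unfolding N_def by (rule schatten_norm_le_card_norm[OF p])
    also have "\<dots> \<le> N * (norm X * B)" by (simp add: B N_def mult_left_mono)
    also have "\<dots> \<le> N * (N * schatten_norm p X * B)"
      using norm_le_card_schatten_norm[OF p, of X] \<open>B > 0\<close> by (simp add: N_def)
    finally show ?thesis
      using schatten_norm_pos[OF p that] by (simp add: divide_le_eq mult_ac)
  qed
  thus ?thesis by (intro bdd_aboveI2) auto
qed

section \<open>Compressions of \<open>T\<close>\<close>

lemma lp_ratio_compressed_map_le:
  fixes T :: "complex^'n^'n \<Rightarrow> complex^'n^'n"
  assumes lin: "complex_linear_mat T" and p: "1 \<le> p"
    and U1: "unitary_mat U1" and U2: "unitary_mat U2" and V1: "unitary_mat V1" and V2: "unitary_mat V2"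
    and l: "l \<noteq> 0"
  shows "lp_norm p (compressed_map T U1 U2 V1 V2 l) / lp_norm p l \<le> schatten_opnorm p T"
proof -
  define Y where "Y = U1 ** diag_of_vec l ** V1"
  have "Y \<noteq> 0" using l unitary_diag_eq_0_iff[OF U1 V1] by (simp add: Y_def)
  hence "schatten_norm p (T Y) / schatten_norm p Y \<le> schatten_opnorm p T"
    unfolding schatten_opnorm_def by (intro cSUP_upper bdd_above_schatten_ratio[OF lin p]) simp
  hence ratio: "schatten_norm p (T Y) \<le> schatten_opnorm p T * lp_norm p l"
    using lp_norm_pos[OF p l] by (simp add: Y_def schatten_norm_unitary_diag[OF U1 V1] divide_le_eq)
  obtain W Z e where W: "unitary_mat W" and Z: "unitary_mat Z" and TY: "T Y = W ** diag_of_vec e ** Z"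
    using singular_value_decomposition by blast
  have "compressed_map T U1 U2 V1 V2 l = diag_vec ((U2 ** W) ** diag_of_vec e ** (Z ** V2))"
    by (simp add: compressed_map_def Y_def[symmetric] TY matrix_mul_assoc)
  hence "lp_norm p (compressed_map T U1 U2 V1 V2 l) \<le> lp_norm p e"
    using lp_norm_diag_vec_unitary_diag_le[OF unitary_mat_mult[OF U2 W] unitary_mat_mult[OF Z V2] p]
    by simp
  also have "\<dots> = schatten_norm p (T Y)" using TY schatten_norm_unitary_diag[OF W Z] by simp
  finally show ?thesis using ratio lp_norm_pos[OF p l] by (simp add: divide_le_eq)
qed

lemma lp_opnorm_compressed_map_le:
  fixes T :: "complex^'n^'n \<Rightarrow> complex^'n^'n"
  assumes lin: "complex_linear_mat T" and p: "1 \<le> p"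
    and U1: "unitary_mat U1" and U2: "unitary_mat U2" and V1: "unitary_mat V1" and V2: "unitary_mat V2"
  shows "lp_opnorm p (compressed_map T U1 U2 V1 V2) \<le> schatten_opnorm p T"
  unfolding lp_opnorm_def
proof (rule cSUP_least)
  have "(\<chi> i. 1) \<noteq> (0::complex^'n)" by (simp add: vec_eq_iff)
  thus "{x::complex^'n. x \<noteq> 0} \<noteq> {}" by blast
qed (use lp_ratio_compressed_map_le[OF lin p U1 U2 V1 V2] in auto)

lemma schatten_ratio_le_lp_opnorm_compressed_map:
  fixes T :: "complex^'n^'n \<Rightarrow> complex^'n^'n"
  assumes lin: "complex_linear_mat T" and p: "1 \<le> p" and X0: "X \<noteq> 0"
  shows "\<exists>U1 U2 V1 V2. unitary_mat U1 \<and> unitary_mat U2 \<and> unitary_mat V1 \<and> unitary_mat V2 \<and>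
    schatten_norm p (T X) / schatten_norm p X \<le> lp_opnorm p (compressed_map T U1 U2 V1 V2)"
proof -
  obtain U1 V1 d where U1: "unitary_mat U1" and V1: "unitary_mat V1"
    and X: "X = U1 ** diag_of_vec d ** V1"
    using singular_value_decomposition by blast
  obtain W Z e where W: "unitary_mat W" and Z: "unitary_mat Z" and TX: "T X = W ** diag_of_vec e ** Z"
    using singular_value_decomposition by blast
  let ?S = "compressed_map T U1 (adjoint_mat W) V1 (adjoint_mat Z)"
  have W': "unitary_mat (adjoint_mat W)" and Z': "unitary_mat (adjoint_mat Z)"
    using W Z by (simp_all add: unitary_mat_adjoint)
  have "adjoint_mat W ** T X ** adjoint_mat Z
      = (adjoint_mat W ** W) ** diag_of_vec e ** (Z ** adjoint_mat Z)"
    by (simp add: TX matrix_mul_assoc)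
  hence "?S d = e" using W Z by (simp add: compressed_map_def X[symmetric] unitary_mat_def)
  have "d \<noteq> 0" using X0 unitary_diag_eq_0_iff[OF U1 V1] X by simp
  have "bdd_above ((\<lambda>l. lp_norm p (?S l) / lp_norm p l) ` {l. l \<noteq> 0})"
    using lp_ratio_compressed_map_le[OF lin p U1 W' V1 Z'] by (intro bdd_aboveI2) auto
  hence "lp_norm p (?S d) / lp_norm p d \<le> lp_opnorm p ?S"
    unfolding lp_opnorm_def using \<open>d \<noteq> 0\<close> by (intro cSUP_upper) auto
  hence "schatten_norm p (T X) / schatten_norm p X \<le> lp_opnorm p ?S"
    using \<open>?S d = e\<close> X TX by (simp add: schatten_norm_unitary_diag U1 V1 W Z)
  thus ?thesis using U1 V1 W' Z' by blast
qed

theorem proposition4p1: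
  fixes T :: "complex^'n^'n \<Rightarrow> complex^'n^'n" and p :: ereal
  assumes "complex_linear_mat T"
    and "1 \<le> p"
  shows "schatten_opnorm p T =
    (SUP U\<in>{(U1, U2, V1, V2). unitary_mat U1 \<and> unitary_mat U2 \<and> unitary_mat V1 \<and> unitary_mat V2}.
       (case U of (U1, U2, V1, V2) \<Rightarrow> lp_opnorm p (compressed_map T U1 U2 V1 V2)))"
proof -
  let ?Q = "{(U1, U2, V1, V2). unitary_mat U1 \<and> unitary_mat U2 \<and> unitary_mat V1 \<and> unitary_mat V2}"
  let ?g = "\<lambda>U. case U of (U1, U2, V1, V2) \<Rightarrow> lp_opnorm p (compressed_map T U1 U2 V1 V2)"
  have g_le: "?g q \<le> schatten_opnorm p T" if "q \<in> ?Q" for q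
    using that lp_opnorm_compressed_map_le[OF assms] by auto
  have "(mat 1, mat 1, mat 1, mat 1) \<in> ?Q" by (simp add: unitary_mat_one)
  hence "(SUP q\<in>?Q. ?g q) \<le> schatten_opnorm p T" using g_le by (intro cSUP_least) auto
  moreover have "schatten_opnorm p T \<le> (SUP q\<in>?Q. ?g q)"
    unfolding schatten_opnorm_def
  proof (rule cSUP_mono)
    have "(mat 1 :: complex^'n^'n) \<noteq> 0" by (simp add: vec_eq_iff mat_def)
    thus "{X :: complex^'n^'n. X \<noteq> 0} \<noteq> {}" by blast
    show "bdd_above (?g ` ?Q)" using g_le by (rule bdd_aboveI2)
    fix X :: "complex^'n^'n" assume "X \<in> {X. X \<noteq> 0}"
    then obtain U1 U2 V1 V2 where "unitary_mat U1" "unitary_mat U2" "unitary_mat V1" "unitary_mat V2"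
      and "schatten_norm p (T X) / schatten_norm p X \<le> lp_opnorm p (compressed_map T U1 U2 V1 V2)"
      using schatten_ratio_le_lp_opnorm_compressed_map[OF assms, of X] by auto
    thus "\<exists>q\<in>?Q. schatten_norm p (T X) / schatten_norm p X \<le> ?g q"
      by (intro bexI[of _ "(U1, U2, V1, V2)"]) auto
  qed
  ultimately show ?thesis by simp
qed

end
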